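(* Let $\Bbbk$ be a field of characteristic zero, $\lambda\in\Bbbk^*$ and $a\in\Bbbk$. If $\lambda\neq\pm1$ and $a\neq0$, then the $\mathcal O$-module $\Omega(\lambda,a)$ is irreducible.
   Context: $\mathcal O$ is the Lie algebra with basis $\mathcal O_n$ ($n\ge1$) and bracket $[\mathcal O_n,\mathcal O_m]=(n-m)\mathcal O_{n+m}-(n+m)\mathcal O_{n-m}$, where $\mathcal O_0=0$ and $\mathcal O_{-k}=-\mathcal O_k$ (it is the span of $L_n-L_{-n}$, $n\ge1$, in the Witt algebra). $\Omega(\lambda,a)$ is $\Bbbk[X]$ with action $\mathcal O_n\cdot f(X)=\lambda^n(X+na)f(X+n)-\lambda^{-n}(X-na)f(X-n)$ for $n\ge1$. *)

theory Defs
  imports "HOL-Computational_Algebra.Polynomial"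
begin

text \<open>The action of the basis element O_n (n >= 1) of the Lie algebra O on
  Omega(lam,a) = k[X]:
  O_n . f(X) = lam^n (X + n a) f(X + n) - lam^(-n) (X - n a) f(X - n).\<close>
definition omega_act :: "'a::field \<Rightarrow> 'a \<Rightarrow> nat \<Rightarrow> 'a poly \<Rightarrow> 'a poly" where
  "omega_act lam a n f =
     smult (lam ^ n) ([:of_nat n * a, 1:] * (f \<circ>\<^sub>p [:of_nat n, 1:]))
   - smult (inverse lam ^ n) ([:- (of_nat n * a), 1:] * (f \<circ>\<^sub>p [:- of_nat n, 1:]))"

text \<open>A submodule: a k-linear subspace of k[X] stable under all O_n, n >= 1
  (equivalently, under all of O, which is spanned by the O_n).\<close>
definition omega_submodule :: "'a::field \<Rightarrow> 'a \<Rightarrow> 'a poly set \<Rightarrow> bool" where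
  "omega_submodule lam a W \<longleftrightarrow>
     0 \<in> W \<and> (\<forall>f\<in>W. \<forall>g\<in>W. f + g \<in> W) \<and> (\<forall>c. \<forall>f\<in>W. smult c f \<in> W) \<and>
     (\<forall>n\<ge>1. \<forall>f\<in>W. omega_act lam a n f \<in> W)"

definition omega_irreducible :: "'a::field \<Rightarrow> 'a \<Rightarrow> bool" where
  "omega_irreducible lam a \<longleftrightarrow>
     (UNIV :: 'a poly set) \<noteq> {0} \<and>
     (\<forall>W. omega_submodule lam a W \<longrightarrow> W = {0} \<or> W = UNIV)"

end

theory Submission
  imports Defs
begin

text \<open>Let W be a nonzero submodule and 0 \<noteq> f \<in> W. As a function of n, O_n f = lam^n A(n) - lam^(-n) B(n),
  where A and B are polynomials in n with coefficients in k[X] of degree at most deg f + 1, and B has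
  exact degree deg f + 1 with a nonzero constant leading coefficient. W contains every linear combination
  of consecutive terms of this sequence, so it is stable under E - c, where E is the shift n \<mapsto> n + 1.
  Applying (E - lam)^(deg f + 2) annihilates the first summand and, because lam \<noteq> lam^(-1), preserves the
  degree of the second; then (E - lam^(-1))^(deg f + 1) turns the second into a nonzero constant.
  Hence 1 \<in> W. Finally O_1 raises degrees by exactly one (the leading coefficient is multiplied by
  lam - lam^(-1)), so W contains polynomials of all degrees and is all of k[X].\<close>

definition forward_diff :: "'b::comm_ring_1 poly \<Rightarrow> 'b poly" where
  "forward_diff P = P \<circ>\<^sub>p [:1, 1:] - P"

lemma forward_diff_pCons:
  "forward_diff (pCons c q) = q \<circ>\<^sub>p [:1, 1:] + pCons 0 (forward_diff q)"
  unfolding forward_diff_def by (simp add: pcompose_pCons algebra_simps)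

lemma forward_diff_0 [simp]: "forward_diff 0 = 0"
  by (simp add: forward_diff_def)

lemma forward_diff_const [simp]: "forward_diff [:c:] = 0"
  by (simp add: forward_diff_def)

lemma forward_diff_smult: "forward_diff (smult c P) = smult c (forward_diff P)"
  by (simp add: forward_diff_def pcompose_smult smult_diff_right)

lemma coeff_pcompose_shift_top:
  fixes q :: "'b::comm_semiring_1 poly"
  assumes "degree q \<le> m"
  shows "coeff (q \<circ>\<^sub>p [:1, 1:]) m = coeff q m"
  using assms
proof (induction q arbitrary: m)
  case (pCons c q)
  show ?case
  proof (cases m)
    case 0
    with pCons.prems show ?thesis by (auto split: if_splits)
  next
    case (Suc m')
    with pCons.prems have "degree q \<le> m'" by (cases "q = 0") auto
    moreover from this have "coeff (q \<circ>\<^sub>p [:1, 1:]) (Suc m') = 0"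
      using degree_pcompose_le[of q "[:1, 1:]"] by (intro coeff_eq_0) simp
    ultimately show ?thesis
      using pCons.IH Suc by (simp add: pcompose_pCons)
  qed
qed simp

lemma forward_diff_degree_coeff:
  fixes P :: "'b::comm_ring_1 poly"
  assumes "degree P \<le> Suc m"
  shows "degree (forward_diff P) \<le> m \<and>
    coeff (forward_diff P) m = of_nat (Suc m) * coeff P (Suc m)"
  using assms
proof (induction P arbitrary: m)
  case (pCons c q)
  have q: "degree q \<le> m"
    using pCons.prems by (cases "q = 0") auto
  have shift_q: "degree (q \<circ>\<^sub>p [:1, 1:]) \<le> m"
    using degree_pcompose_le[of q "[:1, 1:]"] q by simp
  show ?case
  proof (cases m)
    case 0
    with q obtain b where "q = [:b:]" by (metis degree_eq_zeroE le_zero_eq)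
    with 0 show ?thesis by (simp add: forward_diff_pCons)
  next
    case (Suc m')
    with pCons.IH q have IH: "degree (forward_diff q) \<le> m'"
      "coeff (forward_diff q) m' = of_nat m * coeff q m" by auto
    have "degree (forward_diff (pCons c q)) \<le> m"
      unfolding forward_diff_pCons using shift_q IH(1) Suc
      by (intro degree_add_le) (auto simp: degree_pCons_eq_if)
    moreover have "coeff (forward_diff (pCons c q)) m = of_nat (Suc m) * coeff q m"
      using IH(2) Suc coeff_pcompose_shift_top[OF q]
      by (simp add: forward_diff_pCons algebra_simps)
    ultimately show ?thesis by simp
  qed
qed simp

lemma funpow_forward_diff:
  fixes P :: "'b::comm_ring_1 poly"
  assumes "degree P \<le> m"
  shows "(forward_diff ^^ m) P = [:of_nat (fact m) * coeff P m:]"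
  using assms
proof (induction m arbitrary: P)
  case 0
  then show ?case by (simp add: degree_0_id)
next
  case (Suc m)
  note P' = forward_diff_degree_coeff[OF Suc.prems]
  have "(forward_diff ^^ Suc m) P = (forward_diff ^^ m) (forward_diff P)"
    by (simp only: funpow_Suc_right comp_def)
  also have "\<dots> = [:of_nat (fact m) * (of_nat (Suc m) * coeff P (Suc m)):]"
    using Suc.IH P' by simp
  also have "\<dots> = [:of_nat (fact (Suc m)) * coeff P (Suc m):]"
    by (simp add: algebra_simps)
  finally show ?case .
qed

lemma funpow_forward_diff_eq_0:
  fixes P :: "'b::comm_ring_1 poly"
  assumes "degree P \<le> m"
  shows "(forward_diff ^^ Suc m) P = 0"
  using funpow_forward_diff[OF assms] by simp

definition geom_poly_seq :: "'b::comm_ring_1 \<Rightarrow> 'b poly \<Rightarrow> nat \<Rightarrow> 'b" where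
  "geom_poly_seq u P n = u ^ n * poly P (of_nat n)"

definition shift_sub :: "'b::comm_ring_1 \<Rightarrow> (nat \<Rightarrow> 'b) \<Rightarrow> nat \<Rightarrow> 'b" where
  "shift_sub c s n = s (Suc n) - c * s n"

definition twisted_diff :: "'b::comm_ring_1 \<Rightarrow> 'b \<Rightarrow> 'b poly \<Rightarrow> 'b poly" where
  "twisted_diff c u P = smult u (forward_diff P) + smult (u - c) P"

lemma shift_sub_geom_poly_seq:
  "shift_sub c (geom_poly_seq u P) = geom_poly_seq u (twisted_diff c u P)"
  by (rule ext)
    (simp add: shift_sub_def geom_poly_seq_def twisted_diff_def forward_diff_def
      poly_pcompose algebra_simps)

lemma funpow_shift_sub_geom_poly_seq:
  "(shift_sub c ^^ j) (geom_poly_seq u P) = geom_poly_seq u ((twisted_diff c u ^^ j) P)"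
  by (induction j) (simp_all add: shift_sub_geom_poly_seq)

lemma shift_sub_diff: "shift_sub c (s - t) = shift_sub c s - shift_sub c t"
  by (simp add: shift_sub_def fun_eq_iff algebra_simps)

lemma funpow_shift_sub_diff:
  "(shift_sub c ^^ j) (s - t) = (shift_sub c ^^ j) s - (shift_sub c ^^ j) t"
  by (induction j) (simp_all only: funpow.simps id_apply comp_apply shift_sub_diff)

lemma geom_poly_seq_0 [simp]: "geom_poly_seq u 0 n = 0"
  by (simp add: geom_poly_seq_def)

lemma funpow_twisted_diff_0 [simp]: "(twisted_diff c u ^^ j) 0 = 0"
  by (induction j) (simp_all add: twisted_diff_def)

lemma funpow_twisted_diff_self:
  "(twisted_diff u u ^^ j) P = smult (u ^ j) ((forward_diff ^^ j) P)"
  by (induction j) (simp_all add: twisted_diff_def forward_diff_smult)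

lemma twisted_diff_degree_coeff:
  fixes P :: "'b::comm_ring_1 poly"
  assumes "degree P \<le> d"
  shows "degree (twisted_diff c u P) \<le> d \<and> coeff (twisted_diff c u P) d = (u - c) * coeff P d"
proof -
  from assms have "coeff P (Suc d) = 0"
    by (intro coeff_eq_0) simp
  with assms forward_diff_degree_coeff[of P d]
  have "degree (forward_diff P) \<le> d" "coeff (forward_diff P) d = 0"
    by auto
  with assms show ?thesis
    by (auto simp: twisted_diff_def intro!: degree_add_le order.trans[OF degree_smult_le])
qed

lemma funpow_twisted_diff_degree_coeff:
  fixes P :: "'b::comm_ring_1 poly"
  assumes "degree P \<le> d"
  shows "degree ((twisted_diff c u ^^ j) P) \<le> d \<and>
    coeff ((twisted_diff c u ^^ j) P) d = (u - c) ^ j * coeff P d"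
proof (induction j)
  case (Suc j)
  then show ?case
    using twisted_diff_degree_coeff[of "(twisted_diff c u ^^ j) P" d c u] by simp
qed (simp add: assms)

lemma shift_sub_isolates_top_coeff:
  fixes A B :: "'b::comm_ring_1 poly"
  assumes "degree A \<le> k" "degree B \<le> k"
  shows "(shift_sub v ^^ k) ((shift_sub u ^^ Suc k) (geom_poly_seq u A - geom_poly_seq v B)) 0 =
    - (v ^ k * (of_nat (fact k) * ((v - u) ^ Suc k * coeff B k)))"
proof -
  define B' where "B' = (twisted_diff u v ^^ Suc k) B"
  have "(twisted_diff u u ^^ Suc k) A = 0"
    using funpow_forward_diff_eq_0[OF assms(1)] by (simp add: funpow_twisted_diff_self del: funpow.simps)
  then have "(shift_sub v ^^ k) ((shift_sub u ^^ Suc k) (geom_poly_seq u A - geom_poly_seq v B)) =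
      geom_poly_seq u 0 - geom_poly_seq v ((twisted_diff v v ^^ k) B')"
    by (simp add: funpow_shift_sub_diff funpow_shift_sub_geom_poly_seq B'_def del: funpow.simps)
  moreover have "degree B' \<le> k \<and> coeff B' k = (v - u) ^ Suc k * coeff B k"
    unfolding B'_def using assms(2) by (rule funpow_twisted_diff_degree_coeff)
  ultimately show ?thesis
    by (simp add: funpow_twisted_diff_self funpow_forward_diff geom_poly_seq_def del: funpow.simps)
qed

text \<open>A polynomial in the index n with coefficients in k[X]: its value at n is (X + n b) f(X + n e).\<close>

definition affine_shift_poly :: "'a::field \<Rightarrow> 'a \<Rightarrow> 'a poly \<Rightarrow> 'a poly poly" where
  "affine_shift_poly b e f =
     [:[:0, 1:], [:b:]:] * (map_poly (\<lambda>c. [:c:]) f \<circ>\<^sub>p [:[:0, 1:], [:e:]:])"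

lemma poly_affine_shift_poly:
  "poly (affine_shift_poly b e f) (of_nat n) = [:of_nat n * b, 1:] * (f \<circ>\<^sub>p [:of_nat n * e, 1:])"
  by (simp add: affine_shift_poly_def poly_pcompose pcompose_altdef[symmetric] of_nat_poly
      one_pCons mult.commute)

lemma omega_act_eq_geom_poly_seq:
  "omega_act lam a n f =
     geom_poly_seq [:lam:] (affine_shift_poly a 1 f) n -
     geom_poly_seq [:inverse lam:] (affine_shift_poly (- a) (- 1) f) n"
  by (simp add: omega_act_def geom_poly_seq_def poly_affine_shift_poly poly_const_pow)

lemma degree_affine_shift_poly_le: "degree (affine_shift_poly b e f) \<le> Suc (degree f)"
proof -
  have linear: "degree [:[:0, 1:], [:c:]:] \<le> 1" for c :: 'a
    by (simp add: degree_pCons_eq_if)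
  have "degree (map_poly (\<lambda>c. [:c:]) f \<circ>\<^sub>p [:[:0, 1:], [:e:]:]) \<le> degree f * 1"
    using linear[of e]
    by (intro order.trans[OF degree_pcompose_le] mult_le_mono) (simp_all add: degree_map_poly)
  then have "degree (map_poly (\<lambda>c. [:c:]) f \<circ>\<^sub>p [:[:0, 1:], [:e:]:]) \<le> degree f"
    by (simp add: degree_map_poly)
  moreover note linear[of b]
  ultimately show ?thesis
    unfolding affine_shift_poly_def
    using degree_mult_le[of "[:[:0, 1:], [:b:]:]" "map_poly (\<lambda>c. [:c:]) f \<circ>\<^sub>p [:[:0, 1:], [:e:]:]"]
    by linarith
qed

lemma coeff_affine_shift_poly_top:
  assumes "e \<noteq> 0"
  shows "coeff (affine_shift_poly b e f) (Suc (degree f)) = [:b * lead_coeff f * e ^ degree f:]"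
proof -
  let ?G = "map_poly (\<lambda>c. [:c:]) f \<circ>\<^sub>p [:[:0, 1:], [:e:]:]"
  have deg_G: "degree ?G = degree f"
    using assms by (simp add: degree_pcompose degree_map_poly)
  have "coeff ?G (degree f) = [:lead_coeff f * e ^ degree f:]"
    using assms deg_G lead_coeff_comp[of "[:[:0, 1:], [:e:]:]" "map_poly (\<lambda>c. [:c:]) f"]
    by (simp add: degree_map_poly coeff_map_poly poly_const_pow)
  moreover have "coeff ?G (Suc (degree f)) = 0"
    using deg_G by (intro coeff_eq_0) simp
  ultimately show ?thesis
    by (simp add: affine_shift_poly_def mult.assoc)
qed

lemma omega_submodule_diff:
  "omega_submodule lam a W \<Longrightarrow> f \<in> W \<Longrightarrow> g \<in> W \<Longrightarrow> f - g \<in> W"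
  unfolding omega_submodule_def by (metis diff_conv_add_uminus smult_minus_left smult_1_left)

lemma omega_submodule_funpow_shift_sub:
  assumes W: "omega_submodule lam a W" and s: "\<And>n. s n \<in> W"
  shows "(shift_sub [:c:] ^^ j) s n \<in> W"
proof (induction j arbitrary: n)
  case (Suc j)
  have "smult c ((shift_sub [:c:] ^^ j) s n) \<in> W"
    using W Suc.IH unfolding omega_submodule_def by blast
  moreover have "(shift_sub [:c:] ^^ Suc j) s n =
      (shift_sub [:c:] ^^ j) s (Suc n) - smult c ((shift_sub [:c:] ^^ j) s n)"
    by (simp add: shift_sub_def)
  ultimately show ?case
    using omega_submodule_diff[OF W Suc.IH[of "Suc n"]] by simp
qed (simp add: s)

lemma one_mem_omega_submodule:
  fixes lam a :: "'a::field_char_0"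
  assumes W: "omega_submodule lam a W" and f: "f \<in> W" "f \<noteq> 0"
    and lam: "lam \<noteq> 0" "lam \<noteq> inverse lam" and a: "a \<noteq> 0"
  shows "1 \<in> W"
proof -
  define k where "k = Suc (degree f)"
  define L L' where "L = [:lam:]" and "L' = [:inverse lam:]"
  define A B where "A = affine_shift_poly a 1 f" and "B = affine_shift_poly (- a) (- 1) f"
  define s where "s n = omega_act lam a n f" for n
  define c where "c = - (inverse lam ^ k * (of_nat (fact k) *
    ((inverse lam - lam) ^ Suc k * (- a * lead_coeff f * (- 1) ^ degree f))))"
  have s_mem: "s n \<in> W" for n
  proof (cases "n = 0")
    case True
    with W show ?thesis by (simp add: s_def omega_act_def omega_submodule_def)
  next
    case False
    with W f(1) show ?thesis by (simp add: s_def omega_submodule_def)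
  qed
  have "s = geom_poly_seq L A - geom_poly_seq L' B"
    by (simp add: fun_eq_iff s_def omega_act_eq_geom_poly_seq L_def L'_def A_def B_def)
  moreover have "degree A \<le> k" "degree B \<le> k"
    "coeff B k = [:- a * lead_coeff f * (- 1) ^ degree f:]"
    using degree_affine_shift_poly_le coeff_affine_shift_poly_top[of "- 1" "- a" f]
    by (simp_all add: A_def B_def k_def)
  ultimately have "(shift_sub L' ^^ k) ((shift_sub L ^^ Suc k) s) 0 = [:c:]"
    by (simp add: shift_sub_isolates_top_coeff c_def L_def L'_def poly_const_pow of_nat_poly
        del: funpow.simps)
  moreover have "(shift_sub L' ^^ k) ((shift_sub L ^^ Suc k) s) 0 \<in> W"
    unfolding L_def L'_def
    by (intro omega_submodule_funpow_shift_sub[OF W] omega_submodule_funpow_shift_sub[OF W s_mem])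
  moreover have "c \<noteq> 0"
    using lam a f(2) by (simp add: c_def)
  ultimately have "smult (inverse c) [:c:] \<in> W"
    using W unfolding omega_submodule_def by metis
  with \<open>c \<noteq> 0\<close> show ?thesis
    by (simp add: one_pCons)
qed

lemma linear_times_shift_degree_coeff:
  fixes g :: "'a::idom poly"
  assumes "g \<noteq> 0"
  shows "degree ([:b, 1:] * (g \<circ>\<^sub>p [:e, 1:])) = Suc (degree g) \<and>
    coeff ([:b, 1:] * (g \<circ>\<^sub>p [:e, 1:])) (Suc (degree g)) = lead_coeff g"
proof -
  let ?G = "g \<circ>\<^sub>p [:e, 1:]"
  have "lead_coeff ?G = lead_coeff g"
    by (subst lead_coeff_comp) simp_all
  with assms have "?G \<noteq> 0"
    by auto
  then have "degree ([:b, 1:] * ?G) = Suc (degree g)"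
    by (simp add: degree_mult_eq degree_pcompose del: mult_pCons_left)
  with \<open>lead_coeff ?G = lead_coeff g\<close> show ?thesis
    using lead_coeff_mult[of "[:b, 1:]" ?G] by (simp del: mult_pCons_left)
qed

lemma degree_omega_act:
  fixes lam a :: "'a::field"
  assumes "lam ^ n \<noteq> inverse lam ^ n" "g \<noteq> 0"
  shows "degree (omega_act lam a n g) = Suc (degree g)"
proof -
  let ?p = "[:of_nat n * a, 1:] * (g \<circ>\<^sub>p [:of_nat n, 1:])"
    and ?q = "[:- (of_nat n * a), 1:] * (g \<circ>\<^sub>p [:- of_nat n, 1:])"
  have act: "omega_act lam a n g = smult (lam ^ n) ?p - smult (inverse lam ^ n) ?q"
    by (simp add: omega_act_def)
  note p = linear_times_shift_degree_coeff[OF assms(2), of "of_nat n * a" "of_nat n"]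
  note q = linear_times_shift_degree_coeff[OF assms(2), of "- (of_nat n * a)" "- of_nat n"]
  have "degree (omega_act lam a n g) \<le> Suc (degree g)"
    unfolding act using p q
    by (intro degree_diff_le order.trans[OF degree_smult_le]) simp_all
  moreover have "coeff (omega_act lam a n g) (Suc (degree g)) = (lam ^ n - inverse lam ^ n) * lead_coeff g"
    unfolding act coeff_diff coeff_smult using p q by (simp only: left_diff_distrib)
  with assms have "Suc (degree g) \<le> degree (omega_act lam a n g)"
    by (intro le_degree) simp
  ultimately show ?thesis by simp
qed

lemma omega_submodule_has_all_degrees:
  fixes lam a :: "'a::field"
  assumes W: "omega_submodule lam a W" and "1 \<in> W" and lam: "lam \<noteq> inverse lam"
  shows "\<exists>g\<in>W. g \<noteq> 0 \<and> degree g = d"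
proof (induction d)
  case 0
  from \<open>1 \<in> W\<close> show ?case by (intro bexI[of _ 1]) simp_all
next
  case (Suc d)
  then obtain g where g: "g \<in> W" "g \<noteq> 0" "degree g = d" by blast
  have "omega_act lam a 1 g \<in> W"
    using W g(1) unfolding omega_submodule_def by simp
  moreover have "degree (omega_act lam a 1 g) = Suc d"
    using degree_omega_act[of lam 1 g a] lam g(2,3) by simp
  moreover have "omega_act lam a 1 g \<noteq> 0"
    using calculation(2) by auto
  ultimately show ?case by blast
qed

lemma poly_subspace_with_all_degrees:
  fixes W :: "'a::field poly set"
  assumes add: "\<And>f g. f \<in> W \<Longrightarrow> g \<in> W \<Longrightarrow> f + g \<in> W"
    and smult: "\<And>c f. f \<in> W \<Longrightarrow> smult c f \<in> W"
    and degrees: "\<And>d. \<exists>g\<in>W. g \<noteq> 0 \<and> degree g = d"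
  shows "W = UNIV"
proof -
  have "0 \<in> W"
    using degrees[of 0] smult[of _ 0] by force
  have "p \<in> W" for p
  proof (induction "degree p" arbitrary: p rule: less_induct)
    case less
    obtain g where g: "g \<in> W" "g \<noteq> 0" "degree g = degree p"
      using degrees by blast
    define q where "q = p - smult (lead_coeff p / lead_coeff g) g"
    have "q \<in> W"
    proof (cases "q = 0")
      case False
      have "coeff g (degree p) \<noteq> 0"
        using g(2,3) by (metis leading_coeff_0_iff)
      then have "coeff q (degree p) = 0"
        by (simp add: q_def g(3))
      moreover have "degree q \<le> degree p"
        using g(3) unfolding q_def by (intro degree_diff_le order.trans[OF degree_smult_le]) simp_all
      ultimately have "degree q < degree p"
        using False
        by (metis leading_coeff_0_iff le_neq_implies_less)
      then show ?thesis by (rule less)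
    qed (simp add: \<open>0 \<in> W\<close>)
    then show "p \<in> W"
      using add[OF _ smult[OF g(1)], of q "lead_coeff p / lead_coeff g"] by (simp add: q_def)
  qed
  then show ?thesis by blast
qed

theorem proposition3p19:
  fixes lam a :: "'a::field_char_0"
  assumes "lam \<noteq> 0" and "lam \<noteq> 1" and "lam \<noteq> -1" and "a \<noteq> 0"
  shows "omega_irreducible lam a"
proof -
  have lam: "lam \<noteq> inverse lam"
  proof
    assume "lam = inverse lam"
    with assms(1) have "lam * lam = 1"
      by (metis right_inverse)
    then have "(lam - 1) * (lam + 1) = 0"
      by (simp add: algebra_simps)
    with assms(2,3) show False
      by (simp add: add_eq_0_iff2)
  qed
  have "W = {0} \<or> W = UNIV" if W: "omega_submodule lam a W" for W
  proof (cases "W = {0}")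
    case False
    with W obtain f where "f \<in> W" "f \<noteq> 0"
      unfolding omega_submodule_def by blast
    with W assms(1,4) lam have "1 \<in> W"
      by (intro one_mem_omega_submodule)
    with W lam have "W = UNIV"
      using poly_subspace_with_all_degrees[of W] omega_submodule_has_all_degrees[OF W _ lam]
      unfolding omega_submodule_def by blast
    then show ?thesis ..
  qed simp
  then show ?thesis
    unfolding omega_irreducible_def by (metis UNIV_I one_neq_zero singletonD)
qed

end
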